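(* Let $D$ be a locatable digraph of order $n$ with $\gamma_{OL}(D)=n$. Then $D$ contains no double-forced vertex.
   Context: Digraphs are finite and may contain loops; between two distinct vertices there may be arcs in one or both directions, no repeated arcs. $N^-(v)=\{u: uv\text{ is an arc}\}$ (contains $v$ iff $v$ has a loop). An OLD set of $D$ is a set $S\subseteq V(D)$ such that every vertex has an in-neighbour in $S$ and for every two distinct vertices $u,w$ some vertex of $S$ lies in exactly one of $N^-(u),N^-(w)$. $D$ is locatable if it has an OLD set, and then $\gamma_{OL}(D)$ is the minimum size of an OLD set. A vertex $v$ is domination-forced if some vertex $w$ has $N^-(w)=\{v\}$; $v$ is location-forced if there is a pair $\{x,y\}$ of distinct vertices with $N^-(x)\ominus N^-(y)=\{v\}$ ($\ominus$ = symmetric difference). A vertex is double-forced if it is both domination-forced and location-forced, or if it is location-forced because of two different pairs $\{x,y\}\neq\{x',y'\}$ (i.e. $N^-(x)\ominus N^-(y)=N^-(x')\ominus N^-(y')=\{v\}$). *)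

theory Defs
  imports Main
begin

definition digraph :: "'a set \<Rightarrow> ('a \<times> 'a) set \<Rightarrow> bool" where
  "digraph V A \<longleftrightarrow> finite V \<and> A \<subseteq> V \<times> V"

definition in_nbhd :: "'a set \<Rightarrow> ('a \<times> 'a) set \<Rightarrow> 'a \<Rightarrow> 'a set" where
  "in_nbhd V A v = {u \<in> V. (u, v) \<in> A}"

definition symdiff :: "'a set \<Rightarrow> 'a set \<Rightarrow> 'a set" where
  "symdiff X Y = (X - Y) \<union> (Y - X)"

definition is_OLD :: "'a set \<Rightarrow> ('a \<times> 'a) set \<Rightarrow> 'a set \<Rightarrow> bool" where
  "is_OLD V A S \<longleftrightarrow> S \<subseteq> V
     \<and> (\<forall>v\<in>V. in_nbhd V A v \<inter> S \<noteq> {})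
     \<and> (\<forall>u\<in>V. \<forall>w\<in>V. u \<noteq> w \<longrightarrow> symdiff (in_nbhd V A u) (in_nbhd V A w) \<inter> S \<noteq> {})"

definition locatable :: "'a set \<Rightarrow> ('a \<times> 'a) set \<Rightarrow> bool" where
  "locatable V A \<longleftrightarrow> (\<exists>S. is_OLD V A S)"

definition gamma_OL :: "'a set \<Rightarrow> ('a \<times> 'a) set \<Rightarrow> nat" where
  "gamma_OL V A = Min (card ` {S. is_OLD V A S})"

definition domination_forced :: "'a set \<Rightarrow> ('a \<times> 'a) set \<Rightarrow> 'a \<Rightarrow> bool" where
  "domination_forced V A v \<longleftrightarrow> (\<exists>w\<in>V. in_nbhd V A w = {v})"

definition location_forced :: "'a set \<Rightarrow> ('a \<times> 'a) set \<Rightarrow> 'a \<Rightarrow> bool" where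
  "location_forced V A v \<longleftrightarrow> (\<exists>x\<in>V. \<exists>y\<in>V. x \<noteq> y \<and>
      symdiff (in_nbhd V A x) (in_nbhd V A y) = {v})"

definition double_forced :: "'a set \<Rightarrow> ('a \<times> 'a) set \<Rightarrow> 'a \<Rightarrow> bool" where
  "double_forced V A v \<longleftrightarrow>
     (domination_forced V A v \<and> location_forced V A v)
   \<or> (\<exists>x\<in>V. \<exists>y\<in>V. \<exists>x'\<in>V. \<exists>y'\<in>V. x \<noteq> y \<and> x' \<noteq> y' \<and> {x, y} \<noteq> {x', y'} \<and>
        symdiff (in_nbhd V A x) (in_nbhd V A y) = {v} \<and>
        symdiff (in_nbhd V A x') (in_nbhd V A y') = {v})"

end

theory Submission
  imports Defs
begin

text \<open>Call \<open>u\<close> a label of a set family \<open>F\<close> if two members of \<open>F\<close> differ exactly in \<open>u\<close>,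
i.e. span an edge of the hypercube. Deleting a label \<open>v\<close> from every member merges the two
ends of each edge labelled \<open>v\<close> and destroys no label other than \<open>v\<close>; by induction a nonempty finite
family has fewer labels than members (a form of Bondy's theorem), and in fact
\<open>#labels + #(edges labelled v) \<le> #members\<close>.

Apply this to \<open>{\<emptyset>} \<union> {N\<^sup>-(w) : w \<in> V}\<close>, a family of \<open>n + 1\<close> sets. If \<open>\<gamma>\<^sub>O\<^sub>L(D) = n\<close>, no
\<open>V - {u}\<close> is an OLD set, so either some \<open>N\<^sup>-(w) = {u}\<close> (an edge from \<open>\<emptyset>\<close>) or two
in-neighbourhoods differ exactly in \<open>u\<close>: all \<open>n\<close> vertices are labels. A double-forced
vertex labels two distinct edges, which leaves room for at most \<open>n - 1\<close> labels.\<close>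

definition edge_labels :: "'a set set \<Rightarrow> 'a set" where
  "edge_labels F = {v. \<exists>P\<in>F. \<exists>Q\<in>F. symdiff P Q = {v}}"

definition lower_ends :: "'a set set \<Rightarrow> 'a \<Rightarrow> 'a set set" where
  "lower_ends F v = {R \<in> F. v \<notin> R \<and> insert v R \<in> F}"

lemma symdiff_eq_singleton_iff:
  "symdiff P Q = {v} \<longleftrightarrow> (v \<notin> P \<and> Q = insert v P) \<or> (v \<notin> Q \<and> P = insert v Q)"
proof
  assume sd: "symdiff P Q = {v}"
  then have "P - {v} = Q - {v}" "v \<in> P \<longleftrightarrow> v \<notin> Q"
    unfolding symdiff_def by blast+
  then show "(v \<notin> P \<and> Q = insert v P) \<or> (v \<notin> Q \<and> P = insert v Q)"
    by (metis insert_Diff_single insert_absorb)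
qed (auto simp: symdiff_def)

lemma symdiff_Diff_singleton: "symdiff (P - {v}) (Q - {v}) = symdiff P Q - {v}"
  unfolding symdiff_def by blast

lemma finite_edge_labels: "finite F \<Longrightarrow> finite (edge_labels F)"
proof -
  assume "finite F"
  moreover have "edge_labels F \<subseteq> (\<lambda>(P, Q). the_elem (symdiff P Q)) ` (F \<times> F)"
    unfolding edge_labels_def by (clarsimp simp: image_iff) (metis the_elem_eq)
  ultimately show ?thesis by (meson finite_SigmaI finite_imageI finite_subset)
qed

lemma edge_labels_subset_Union: "edge_labels F \<subseteq> \<Union>F"
  unfolding edge_labels_def symdiff_def by blast

lemma edge_labels_iff_lower_ends: "v \<in> edge_labels F \<longleftrightarrow> lower_ends F v \<noteq> {}"
  unfolding edge_labels_def lower_ends_def symdiff_eq_singleton_iff by blast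

lemma edge_labels_subset_collapse:
  "edge_labels F \<subseteq> insert v (edge_labels ((\<lambda>Q. Q - {v}) ` F))"
  unfolding edge_labels_def by (force simp: symdiff_Diff_singleton)

lemma card_edge_labels_le_collapse:
  assumes "finite F"
  shows "card (edge_labels F) \<le> card (edge_labels ((\<lambda>Q. Q - {v}) ` F)) + 1"
proof -
  have "card (edge_labels F) \<le> card (insert v (edge_labels ((\<lambda>Q. Q - {v}) ` F)))"
    using assms by (intro card_mono edge_labels_subset_collapse) (simp add: finite_edge_labels)
  also have "\<dots> \<le> card (edge_labels ((\<lambda>Q. Q - {v}) ` F)) + 1"
    by (simp add: card_insert_le_m1)
  finally show ?thesis .
qed

lemma card_collapse_add_lower_ends_le:
  assumes "finite F"
  shows "card ((\<lambda>Q. Q - {v}) ` F) + card (lower_ends F v) \<le> card F"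
proof -
  let ?U = "insert v ` lower_ends F v"
  have U: "?U \<subseteq> F" "finite ?U" using assms unfolding lower_ends_def by auto
  have "Q - {v} \<in> (\<lambda>Q. Q - {v}) ` (F - ?U)" if "Q \<in> F" for Q
  proof (cases "Q \<in> ?U")
    case True
    then obtain R where "R \<in> lower_ends F v" "Q = insert v R" by blast
    then have "R \<in> F - ?U" "Q - {v} = R - {v}" by (auto simp: lower_ends_def)
    then show ?thesis by blast
  qed (use that in blast)
  then have "(\<lambda>Q. Q - {v}) ` F = (\<lambda>Q. Q - {v}) ` (F - ?U)" by blast
  then have "card ((\<lambda>Q. Q - {v}) ` F) \<le> card F - card ?U"
    using card_image_le[of "F - ?U"] assms U by (simp add: card_Diff_subset)
  moreover have "card ?U = card (lower_ends F v)"
    by (intro card_image inj_onI) (auto simp: lower_ends_def dest: insert_ident)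
  moreover have "card ?U \<le> card F" using U assms by (intro card_mono)
  ultimately show ?thesis by linarith
qed

theorem card_edge_labels_less:
  "finite F \<Longrightarrow> F \<noteq> {} \<Longrightarrow> card (edge_labels F) < card F"
proof (induction "card F" arbitrary: F rule: less_induct)
  case less
  show ?case
  proof (cases "edge_labels F = {}")
    case True
    then show ?thesis using less.prems by (simp add: card_gt_0_iff)
  next
    case False
    then obtain v where "lower_ends F v \<noteq> {}" using edge_labels_iff_lower_ends by (metis equals0I)
    then have "card (lower_ends F v) > 0"
      using less.prems(1) by (simp add: card_gt_0_iff lower_ends_def)
    then have smaller: "card ((\<lambda>Q. Q - {v}) ` F) < card F"
      using card_collapse_add_lower_ends_le[OF less.prems(1), of v] by linarith
    have "card (edge_labels ((\<lambda>Q. Q - {v}) ` F)) < card ((\<lambda>Q. Q - {v}) ` F)"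
      using less.hyps[OF smaller] less.prems by simp
    then show ?thesis
      using card_edge_labels_le_collapse[OF less.prems(1), of v] smaller by linarith
  qed
qed

lemma card_edge_labels_add_lower_ends_le:
  assumes "finite F"
  shows "card (edge_labels F) + card (lower_ends F v) \<le> card F"
proof (cases "F = {}")
  case True
  then show ?thesis by (simp add: edge_labels_def lower_ends_def)
next
  case False
  then show ?thesis
    using card_edge_labels_le_collapse[OF assms, of v]
      card_edge_labels_less[of "(\<lambda>Q. Q - {v}) ` F"]
      card_collapse_add_lower_ends_le[OF assms, of v] assms
    by simp
qed

lemma two_le_card_lower_ends:
  assumes "finite F" "P \<in> F" "Q \<in> F" "P' \<in> F" "Q' \<in> F"
    and "symdiff P Q = {v}" "symdiff P' Q' = {v}" "{P, Q} \<noteq> {P', Q'}"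
  shows "2 \<le> card (lower_ends F v)"
proof -
  have edge: "\<exists>R \<in> lower_ends F v. {P, Q} = {R, insert v R}"
    if PQ: "P \<in> F" "Q \<in> F" "symdiff P Q = {v}" for P Q
  proof -
    consider "v \<notin> P" "Q = insert v P" | "v \<notin> Q" "P = insert v Q"
      using PQ(3) symdiff_eq_singleton_iff by metis
    then show ?thesis
    proof cases
      case 1
      then show ?thesis using PQ(1,2) by (intro bexI[of _ P]) (simp_all add: lower_ends_def)
    next
      case 2
      then show ?thesis
        using PQ(1,2) by (intro bexI[of _ Q]) (simp_all add: lower_ends_def insert_commute)
    qed
  qed
  obtain R where R: "R \<in> lower_ends F v" "{P, Q} = {R, insert v R}"
    using edge[OF assms(2,3,6)] by blast
  obtain R' where R': "R' \<in> lower_ends F v" "{P', Q'} = {R', insert v R'}"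
    using edge[OF assms(4,5,7)] by blast
  have "R \<noteq> R'" using assms(8) R(2) R'(2) by metis
  moreover have "finite (lower_ends F v)" using assms(1) by (simp add: lower_ends_def)
  ultimately show ?thesis
    using R(1) R'(1) card_mono[of "lower_ends F v" "{R, R'}"] by simp
qed

lemma is_OLD_superset: "is_OLD V A S \<Longrightarrow> S \<subseteq> T \<Longrightarrow> T \<subseteq> V \<Longrightarrow> is_OLD V A T"
  unfolding is_OLD_def by blast

lemma locatable_iff_is_OLD_all: "locatable V A \<longleftrightarrow> is_OLD V A V"
  unfolding locatable_def using is_OLD_superset[of V A _ V] by (auto simp: is_OLD_def)

lemma gamma_OL_le_card:
  assumes "finite V" "is_OLD V A S"
  shows "gamma_OL V A \<le> card S"
proof -
  have "card ` {S. is_OLD V A S} \<subseteq> {..card V}"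
    using assms(1) unfolding is_OLD_def by (auto intro: card_mono)
  then show ?thesis
    unfolding gamma_OL_def using assms(2) by (intro Min_le) (auto intro: finite_subset)
qed

lemma in_nbhd_subset: "in_nbhd V A w \<subseteq> V"
  unfolding in_nbhd_def by blast

lemma in_nbhd_nonempty: "locatable V A \<Longrightarrow> w \<in> V \<Longrightarrow> in_nbhd V A w \<noteq> {}"
  unfolding locatable_iff_is_OLD_all is_OLD_def by blast

lemma inj_on_in_nbhd: "locatable V A \<Longrightarrow> inj_on (in_nbhd V A) V"
  unfolding locatable_iff_is_OLD_all is_OLD_def inj_on_def symdiff_def by blast

definition nbhd_family :: "'a set \<Rightarrow> ('a \<times> 'a) set \<Rightarrow> 'a set set" where
  "nbhd_family V A = insert {} (in_nbhd V A ` V)"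

lemma finite_nbhd_family: "finite V \<Longrightarrow> finite (nbhd_family V A)"
  unfolding nbhd_family_def by simp

lemma card_nbhd_family:
  assumes "finite V" "locatable V A"
  shows "card (nbhd_family V A) = card V + 1"
proof -
  have "{} \<notin> in_nbhd V A ` V" using in_nbhd_nonempty[OF assms(2)] by blast
  then show ?thesis
    using assms card_image[OF inj_on_in_nbhd] by (simp add: nbhd_family_def)
qed

lemma edge_labels_nbhd_family_subset: "edge_labels (nbhd_family V A) \<subseteq> V"
  using edge_labels_subset_Union[of "nbhd_family V A"] in_nbhd_subset[of V A]
  unfolding nbhd_family_def by blast

lemma in_edge_labels_nbhd_family:
  assumes "locatable V A" "u \<in> V" "\<not> is_OLD V A (V - {u})"
  shows "u \<in> edge_labels (nbhd_family V A)"
proof -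
  let ?N = "in_nbhd V A"
  consider (dominated_by_u) w where "w \<in> V" "?N w \<inter> (V - {u}) = {}"
    | (located_by_u) x y where "x \<in> V" "y \<in> V" "x \<noteq> y"
        "symdiff (?N x) (?N y) \<inter> (V - {u}) = {}"
    using assms(3) unfolding is_OLD_def by blast
  then show ?thesis
  proof cases
    case dominated_by_u
    then have "symdiff {} (?N w) = {u}"
      using in_nbhd_nonempty[OF assms(1)] in_nbhd_subset[of V A w]
      unfolding symdiff_def by blast
    then show ?thesis
      using dominated_by_u unfolding edge_labels_def nbhd_family_def by blast
  next
    case located_by_u
    have "symdiff (?N x) (?N y) \<noteq> {}"
      using located_by_u assms(1) unfolding locatable_iff_is_OLD_all is_OLD_def by blast
    then have "symdiff (?N x) (?N y) = {u}"
      using located_by_u in_nbhd_subset[of V A] unfolding symdiff_def by blast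
    then show ?thesis
      using located_by_u unfolding edge_labels_def nbhd_family_def by blast
  qed
qed

lemma two_le_card_lower_ends_if_double_forced:
  assumes "finite V" "locatable V A" "double_forced V A v"
  shows "2 \<le> card (lower_ends (nbhd_family V A) v)"
proof -
  let ?N = "in_nbhd V A"
  have in_family: "?N z \<in> nbhd_family V A" if "z \<in> V" for z
    using that unfolding nbhd_family_def by blast
  have empty_in_family: "{} \<in> nbhd_family V A"
    unfolding nbhd_family_def by blast
  note two_le = two_le_card_lower_ends[OF finite_nbhd_family[OF assms(1)]]
  from assms(3) consider
      (dominated) "domination_forced V A v" "location_forced V A v"
    | (located_twice) x y x' y' where "x \<in> V" "y \<in> V" "x' \<in> V" "y' \<in> V"
        "x \<noteq> y" "x' \<noteq> y'" "{x, y} \<noteq> {x', y'}"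
        "symdiff (?N x) (?N y) = {v}" "symdiff (?N x') (?N y') = {v}"
    unfolding double_forced_def by blast
  then show ?thesis
  proof cases
    case dominated
    then obtain w x y where wxy: "w \<in> V" "?N w = {v}" "x \<in> V" "y \<in> V"
        "symdiff (?N x) (?N y) = {v}"
      unfolding domination_forced_def location_forced_def by blast
    have sd: "symdiff {} (?N w) = {v}" using wxy(2) by (simp add: symdiff_def)
    have "{{}, ?N w} \<noteq> {?N x, ?N y}"
      using in_nbhd_nonempty[OF assms(2) wxy(3)] in_nbhd_nonempty[OF assms(2) wxy(4)]
      by (metis doubleton_eq_iff)
    then show ?thesis
      by (rule two_le[OF empty_in_family in_family[OF wxy(1)] in_family[OF wxy(3)]
          in_family[OF wxy(4)] sd wxy(5)])
  next
    case located_twice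
    have "{?N x, ?N y} \<noteq> {?N x', ?N y'}"
      using located_twice(1-4,7) inj_on_image_eq_iff[OF inj_on_in_nbhd[OF assms(2)],
          of "{x, y}" "{x', y'}"]
      by simp
    then show ?thesis
      by (rule two_le[OF in_family[OF located_twice(1)] in_family[OF located_twice(2)]
          in_family[OF located_twice(3)] in_family[OF located_twice(4)] located_twice(8,9)])
  qed
qed

lemma not_is_OLD_Diff_singleton:
  assumes "finite V" "gamma_OL V A = card V" "u \<in> V"
  shows "\<not> is_OLD V A (V - {u})"
proof
  assume "is_OLD V A (V - {u})"
  from gamma_OL_le_card[OF assms(1) this] have "card V \<le> card (V - {u})"
    unfolding assms(2) .
  moreover have "card (V - {u}) < card V"
    using assms(1,3) by (rule card_Diff1_less)
  ultimately show False by simp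
qed

theorem proposition11:
  fixes V :: "'a set" and A :: "('a \<times> 'a) set" and n :: nat
  assumes "digraph V A"
    and "card V = n"
    and "locatable V A"
    and "gamma_OL V A = n"
  shows "\<not> (\<exists>v\<in>V. double_forced V A v)"
proof
  assume "\<exists>v\<in>V. double_forced V A v"
  then obtain v where "double_forced V A v" by blast
  let ?F = "nbhd_family V A"
  have "finite V" using assms(1) by (simp add: digraph_def)
  have "gamma_OL V A = card V" using assms(2,4) by simp
  then have "u \<in> edge_labels ?F" if "u \<in> V" for u
    using in_edge_labels_nbhd_family[OF assms(3) that]
      not_is_OLD_Diff_singleton[OF \<open>finite V\<close> _ that] by blast
  then have "V \<subseteq> edge_labels ?F" by blast
  with edge_labels_nbhd_family_subset have "edge_labels ?F = V" by (rule subset_antisym)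
  moreover have "2 \<le> card (lower_ends ?F v)"
    using two_le_card_lower_ends_if_double_forced[OF \<open>finite V\<close> assms(3)] \<open>double_forced V A v\<close> .
  moreover have "card (edge_labels ?F) + card (lower_ends ?F v) \<le> card ?F"
    by (rule card_edge_labels_add_lower_ends_le[OF finite_nbhd_family[OF \<open>finite V\<close>]])
  ultimately show False
    using card_nbhd_family[OF \<open>finite V\<close> assms(3)] by simp
qed

end
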